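(* Let $\beta>0$, $K\ge1$, users $\mathcal X=\{x_1,\dots,x_m\}\subset\mathbb R^d$ and $\sigma:\mathbb R^d\times\mathbb R^d\to[0,1]$ be fixed. Then the welfare $W$, viewed as a function of a finite multiset of strategies, is submodular: for every finite multiset $S$ of strategies with $|S|\ge K-1$ and any strategies $s_x,s_y\in\mathbb R^d$, $$W(S\cup\{s_x\})-W(S)\ge W(S\cup\{s_x,s_y\})-W(S\cup\{s_y\}).$$
   Context: For a finite multiset $S$ of strategies (points of $\mathbb R^d$) with $|S|\ge K$ and a user $x_j$, $\mathcal T_j(S;K)$ is a sub-multiset of $K$ elements of $S$ with the largest values of $\sigma(\cdot,x_j)$; if $|S|=K-1$, $\mathcal T_j(S;K)=S\cup\{\bar s\}$ where $\bar s$ is a default item with $\sigma(\bar s,x)=0$ for all $x$. With $\varepsilon_s$ ($s\in\mathcal T_j(S;K)$) i.i.d. Gumbel of location $-\beta\gamma$ and scale $\beta$ (CDF $t\mapsto\exp(-e^{-(t+\beta\gamma)/\beta})$, $\gamma$ the Euler–Mascheroni constant), the welfare is $W(S)=\sum_{j=1}^m\mathbb E\big[\max_{s\in\mathcal T_j(S;K)}\{\sigma(s,x_j)+\varepsilon_s\}\big]$, which equals $\beta\sum_{j=1}^m\log\sum_{s\in\mathcal T_j(S;K)}\exp(\sigma(s,x_j)/\beta)$. When $S=\{s_1,\dots,s_n\}$ comes from a joint strategy of a competing content creation game, this is the social welfare of that game under top-$K$ recommendation and the Gumbel random-utility choice model. *)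

theory Defs
  imports "HOL-Analysis.Analysis" "HOL-Library.Multiset"
begin

text \<open>Top-K sub-multiset for user x: a sub-multiset of K elements of S whose
  sigma-values are at least those of all remaining elements of S.
  (Chosen by Hilbert choice; the welfare does not depend on the choice.)\<close>
definition topK :: "('a \<Rightarrow> 'a \<Rightarrow> real) \<Rightarrow> nat \<Rightarrow> 'a multiset \<Rightarrow> 'a \<Rightarrow> 'a multiset" where
  "topK \<sigma> K S x = (SOME T. T \<subseteq># S \<and> size T = K \<and>
        (\<forall>a\<in>#T. \<forall>b\<in>#(S - T). \<sigma> b x \<le> \<sigma> a x))"

text \<open>Welfare of user x: beta * log sum exp over the recommended set. If |S| = K-1
  the recommended set is S plus a default item with sigma = 0.\<close>
definition user_welfare ::
  "('a \<Rightarrow> 'a \<Rightarrow> real) \<Rightarrow> real \<Rightarrow> nat \<Rightarrow> 'a multiset \<Rightarrow> 'a \<Rightarrow> real" where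
  "user_welfare \<sigma> \<beta> K S x =
     (if K \<le> size S then \<beta> * ln (\<Sum>s\<in>#topK \<sigma> K S x. exp (\<sigma> s x / \<beta>))
      else \<beta> * ln ((\<Sum>s\<in>#S. exp (\<sigma> s x / \<beta>)) + exp (0 / \<beta>)))"

definition welfare ::
  "('a \<Rightarrow> 'a \<Rightarrow> real) \<Rightarrow> real \<Rightarrow> nat \<Rightarrow> nat \<Rightarrow> (nat \<Rightarrow> 'a) \<Rightarrow> 'a multiset \<Rightarrow> real" where
  "welfare \<sigma> \<beta> K m x S = (\<Sum>j=1..m. user_welfare \<sigma> \<beta> K S (x j))"

end

theory Submission
  imports Defs
begin

text \<open>For each user, only the top-K weights \<open>w s = exp (\<sigma> s x / \<beta>) \<ge> 1\<close> enter the welfare, and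
  their sum does not depend on which top-K sub-multiset is chosen. Inserting a strategy \<open>z\<close>
  raises this sum by \<open>max 0 (w z - w a)\<close>, where \<open>a\<close> is a weakest member of the current
  top-K set, and never lowers that weakest weight. Hence adding \<open>s\<^sub>y\<close> first makes the later
  increment caused by \<open>s\<^sub>x\<close> no larger, while the sum it is added to becomes no smaller;
  since \<open>ln (A + p) - ln A\<close> increases in \<open>p\<close> and decreases in \<open>A\<close>, each user's welfare is
  submodular, and so is their sum. The case \<open>|S| = K - 1\<close> is the same argument with the
  default item, of weight 1, as the weakest member.\<close>

lemma obtain_min_in_mset:
  fixes r :: "'a \<Rightarrow> 'b::linorder"
  assumes "T \<noteq> {#}"
  obtains a where "a \<in># T" and "\<forall>c\<in>#T. r a \<le> r c"
  using ex_is_arg_min_if_finite[of "set_mset T" r] assms by (auto simp: is_arg_min_linorder)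

definition is_topK :: "('a \<Rightarrow> 'b::linorder) \<Rightarrow> nat \<Rightarrow> 'a multiset \<Rightarrow> 'a multiset \<Rightarrow> bool" where
  "is_topK r K T S \<longleftrightarrow> T \<subseteq># S \<and> size T = K \<and> (\<forall>a\<in>#T. \<forall>b\<in>#S - T. r b \<le> r a)"

lemma is_topK_add_mset_below:
  assumes "is_topK r K T S" and "\<forall>c\<in>#T. r z \<le> r c"
  shows "is_topK r K T (add_mset z S)"
proof -
  have "add_mset z S - T = add_mset z (S - T)"
    using assms(1) unfolding is_topK_def by (metis add_mset_add_single subset_mset.diff_add_assoc2)
  with assms show ?thesis
    unfolding is_topK_def by (auto intro: subset_mset.order_trans)
qed

lemma is_topK_add_mset_exchange:
  assumes top: "is_topK r K T S" and a: "a \<in># T" "\<forall>c\<in>#T. r a \<le> r c" and az: "r a \<le> r z"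
  shows "is_topK r K (add_mset z (T - {#a#})) (add_mset z S)"
  unfolding is_topK_def
proof (intro conjI ballI)
  have TS: "T \<subseteq># S" and size: "size T = K" and dom: "\<forall>c\<in>#T. \<forall>b\<in>#S - T. r b \<le> r c"
    using top unfolding is_topK_def by auto
  show "add_mset z (T - {#a#}) \<subseteq># add_mset z S"
    using subset_mset.order_trans[OF diff_subset_eq_self TS] by simp
  show "size (add_mset z (T - {#a#})) = K"
    using size arg_cong[OF insert_DiffM[OF a(1)], of size] by simp
  fix c b
  assume c: "c \<in># add_mset z (T - {#a#})" and "b \<in># add_mset z S - add_mset z (T - {#a#})"
  moreover have "add_mset z S - add_mset z (T - {#a#}) = add_mset a (S - T)"
    unfolding add_mset_diff_bothsides using a(1) TS
    by (metis add_mset_add_single single_subset_iff subset_mset.diff_add_assoc2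
        subset_mset.diff_diff_right)
  ultimately have b: "b \<in># add_mset a (S - T)"
    by simp
  have rb: "r b \<le> r a"
    using b dom a(1) by (cases "b = a") auto
  show "r b \<le> r c"
  proof (cases "c = z")
    case True
    then show ?thesis
      using rb az by simp
  next
    case False
    then have "c \<in># T"
      using c by (auto dest: in_diffD)
    then show ?thesis
      using b dom a(2) by (cases "b = a") auto
  qed
qed

lemma is_topK_self [simp]: "size S = K \<Longrightarrow> is_topK r K S S"
  unfolding is_topK_def by simp

lemma ex_is_topK:
  assumes "K \<le> size S"
  shows "\<exists>T. is_topK r K T S"
  using assms
proof (induction S)
  case empty
  then show ?case
    unfolding is_topK_def by simp
next
  case (add z S)
  show ?case
  proof (cases "K \<le> size S")
    case True
    then obtain T where T: "is_topK r K T S"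
      using add.IH by blast
    show ?thesis
    proof (cases "\<forall>c\<in>#T. r z \<le> r c")
      case True
      then show ?thesis
        using is_topK_add_mset_below[OF T] by blast
    next
      case False
      then obtain c where "c \<in># T" "r c < r z"
        by (auto simp: not_le)
      moreover from \<open>c \<in># T\<close> have "T \<noteq> {#}"
        by auto
      then obtain a where "a \<in># T" "\<forall>c\<in>#T. r a \<le> r c"
        by (rule obtain_min_in_mset)
      ultimately show ?thesis
        using is_topK_add_mset_exchange[OF T] by (meson less_imp_le order_trans)
    qed
  next
    case False
    then have "is_topK r K (add_mset z S) (add_mset z S)"
      using add.prems by simp
    then show ?thesis ..
  qed
qed

lemma topK_is_topK:
  assumes "K \<le> size S"
  shows "is_topK (\<lambda>s. \<sigma> s x) K (topK \<sigma> K S x) S"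
  using someI_ex[OF ex_is_topK[OF assms, of "\<lambda>s. \<sigma> s x"]]
  unfolding is_topK_def topK_def .

lemma sum_mset_le_if_dominated:
  fixes f :: "'a \<Rightarrow> 'b::ordered_comm_monoid_add"
  assumes "size X = size Y" and "\<forall>d\<in>#X. \<forall>e\<in>#Y. f d \<le> f e"
  shows "(\<Sum>s\<in>#X. f s) \<le> (\<Sum>s\<in>#Y. f s)"
  using assms
proof (induction X arbitrary: Y)
  case empty
  then show ?case by simp
next
  case (add d X)
  then obtain e Y' where Y: "Y = add_mset e Y'"
    by (metis size_eq_Suc_imp_eq_union size_add_mset)
  then have "(\<Sum>s\<in>#X. f s) \<le> (\<Sum>s\<in>#Y'. f s)" and "f d \<le> f e"
    using add by auto
  then show ?case
    using Y by (simp add: add_mono)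
qed

lemma is_topK_sum_maximal:
  fixes r :: "'a \<Rightarrow> 'b::linorder" and w :: "'a \<Rightarrow> real"
  assumes top: "is_topK r K T S" and U: "U \<subseteq># S" "size U = K"
    and mono: "\<And>a b. r b \<le> r a \<Longrightarrow> w b \<le> w a"
  shows "(\<Sum>s\<in>#U. w s) \<le> (\<Sum>s\<in>#T. w s)"
proof -
  have T: "T \<subseteq># S" "size T = K" "\<forall>a\<in>#T. \<forall>b\<in>#S - T. r b \<le> r a"
    using top unfolding is_topK_def by auto
  have U_split: "U = (U \<inter># T) + (U - T)" and T_split: "T = (U \<inter># T) + (T - U)"
    by (simp_all add: multiset_eq_iff min_def)
  have "size (U - T) = size (T - U)"
    using arg_cong[OF U_split, of size] arg_cong[OF T_split, of size] U(2) T(2) by simp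
  moreover have "\<forall>d\<in>#U - T. \<forall>e\<in>#T - U. w d \<le> w e"
  proof (intro ballI)
    fix d e assume "d \<in># U - T" and "e \<in># T - U"
    moreover have "U - T \<subseteq># S - T"
      using U(1) by (simp add: subseteq_mset_def diff_le_mono)
    ultimately have "d \<in># S - T" and "e \<in># T"
      by (auto dest: in_diffD mset_subset_eqD)
    then show "w d \<le> w e"
      using T(3) mono by blast
  qed
  ultimately have "(\<Sum>s\<in>#U - T. w s) \<le> (\<Sum>s\<in>#T - U. w s)"
    by (rule sum_mset_le_if_dominated)
  then show ?thesis
    by (subst U_split, subst T_split) simp
qed

lemma is_topK_sum_unique:
  fixes r :: "'a \<Rightarrow> 'b::linorder" and w :: "'a \<Rightarrow> real"
  assumes "is_topK r K T1 S" "is_topK r K T2 S"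
    and "\<And>a b. r b \<le> r a \<Longrightarrow> w b \<le> w a"
  shows "(\<Sum>s\<in>#T1. w s) = (\<Sum>s\<in>#T2. w s)"
  using is_topK_sum_maximal[OF assms(1) _ _ assms(3), of T2]
    is_topK_sum_maximal[OF assms(2) _ _ assms(3), of T1] assms(1,2)
  unfolding is_topK_def by (meson order_antisym)

lemma is_topK_add_mset:
  fixes r :: "'a \<Rightarrow> 'b::linorder" and w :: "'a \<Rightarrow> real"
  assumes top: "is_topK r K T S" and a: "a \<in># T" "\<forall>c\<in>#T. r a \<le> r c"
    and mono: "\<And>a b. r b \<le> r a \<Longrightarrow> w b \<le> w a"
  obtains T' where "is_topK r K T' (add_mset z S)"
    and "(\<Sum>s\<in>#T'. w s) = (\<Sum>s\<in>#T. w s) + max 0 (w z - w a)"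
    and "\<forall>c\<in>#T'. r a \<le> r c"
proof (cases "r z \<le> r a")
  case True
  then have "is_topK r K T (add_mset z S)"
    using a(2) by (intro is_topK_add_mset_below[OF top]) (auto intro: order_trans)
  moreover have "w z \<le> w a"
    using mono True .
  ultimately show ?thesis
    using that a(2) by simp
next
  case False
  have "w a \<le> w z"
    using mono False by simp
  moreover have "(\<Sum>s\<in>#T. w s) = w a + (\<Sum>s\<in>#T - {#a#}. w s)"
    using sum_mset.insert[of w a "T - {#a#}"] unfolding insert_DiffM[OF a(1)] .
  ultimately have "(\<Sum>s\<in>#add_mset z (T - {#a#}). w s) = (\<Sum>s\<in>#T. w s) + max 0 (w z - w a)"
    by simp
  moreover have "is_topK r K (add_mset z (T - {#a#})) (add_mset z S)"
    using is_topK_add_mset_exchange[OF top a] False by simp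
  moreover have "\<forall>c\<in>#add_mset z (T - {#a#}). r a \<le> r c"
    using a(2) False by (auto dest: in_diffD)
  ultimately show ?thesis
    using that by blast
qed

lemma user_welfare_eq_is_topK:
  assumes "\<beta> > 0" and "is_topK (\<lambda>s. \<sigma> s x) K T S"
  shows "user_welfare \<sigma> \<beta> K S x = \<beta> * ln (\<Sum>s\<in>#T. exp (\<sigma> s x / \<beta>))"
proof -
  have "K \<le> size S"
    using assms(2) unfolding is_topK_def by (metis size_mset_mono)
  moreover have "(\<Sum>s\<in>#topK \<sigma> K S x. exp (\<sigma> s x / \<beta>)) = (\<Sum>s\<in>#T. exp (\<sigma> s x / \<beta>))"
    using is_topK_sum_unique[OF topK_is_topK[where \<sigma>=\<sigma> and x=x, OF \<open>K \<le> size S\<close>] assms(2)] assms(1)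
    by (simp add: divide_right_mono)
  ultimately show ?thesis
    unfolding user_welfare_def by simp
qed

lemma ln_add_diff_mono:
  fixes A B p q :: real
  assumes "0 < A" "A \<le> B" "0 \<le> q" "q \<le> p"
  shows "ln (B + q) - ln B \<le> ln (A + p) - ln A"
proof -
  have "0 < B"
    using assms by linarith
  then have "0 \<le> q / B"
    using assms(3) by simp
  have "ln (B + q) - ln B = ln (1 + q / B)"
    using ln_div[of "B + q" B] \<open>0 < B\<close> assms(3) by (simp add: add_divide_distrib)
  also have "\<dots> \<le> ln (1 + p / A)"
  proof (rule ln_mono)
    show "1 + q / B \<le> 1 + p / A"
      using frac_le[of p q A B] assms by simp
    show "0 < 1 + q / B"
      using \<open>0 \<le> q / B\<close> by linarith
  qed
  also have "\<dots> = ln (A + p) - ln A"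
    using ln_div[of "A + p" A] assms by (simp add: add_divide_distrib)
  finally show ?thesis .
qed

lemma user_welfare_submodular_large:
  fixes \<sigma> :: "'a \<Rightarrow> 'a \<Rightarrow> real"
  assumes "\<beta> > 0" and "K \<ge> 1" and "\<And>s. 0 \<le> \<sigma> s u" and "K \<le> size S"
  shows "user_welfare \<sigma> \<beta> K (add_mset sx (add_mset sy S)) u - user_welfare \<sigma> \<beta> K (add_mset sy S) u
         \<le> user_welfare \<sigma> \<beta> K (add_mset sx S) u - user_welfare \<sigma> \<beta> K S u"
proof -
  define r where "r = (\<lambda>s. \<sigma> s u)"
  define w where "w = (\<lambda>s. exp (\<sigma> s u / \<beta>))"
  have mono: "\<And>a b. r b \<le> r a \<Longrightarrow> w b \<le> w a"
    unfolding r_def w_def using assms(1) by (simp add: divide_right_mono)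
  have W: "user_welfare \<sigma> \<beta> K M u = \<beta> * ln (\<Sum>s\<in>#T. w s)" if "is_topK r K T M" for T M
    using user_welfare_eq_is_topK[OF assms(1), of \<sigma> u K T M] that unfolding r_def w_def by simp
  have pos: "0 < (\<Sum>s\<in>#T. w s)" if "is_topK r K T M" for T M
  proof -
    have "(\<Sum>s\<in>#T. 1) \<le> (\<Sum>s\<in>#T. w s)"
      unfolding w_def using assms(1,3) by (intro sum_mset_mono) simp
    then show ?thesis
      using that assms(2) unfolding is_topK_def by simp
  qed
  have nonempty: "T \<noteq> {#}" if "is_topK r K T M" for T M
    using that assms(2) unfolding is_topK_def by auto
  obtain T where T: "is_topK r K T S"
    using ex_is_topK[OF assms(4)] by blast
  obtain a where a: "a \<in># T" "\<forall>c\<in>#T. r a \<le> r c"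
    using obtain_min_in_mset[OF nonempty[OF T]] by blast
  obtain Tx where Tx: "is_topK r K Tx (add_mset sx S)"
    "(\<Sum>s\<in>#Tx. w s) = (\<Sum>s\<in>#T. w s) + max 0 (w sx - w a)"
    using is_topK_add_mset[where w=w and z=sx, OF T a mono] by blast
  obtain Ty where Ty: "is_topK r K Ty (add_mset sy S)"
    "(\<Sum>s\<in>#Ty. w s) = (\<Sum>s\<in>#T. w s) + max 0 (w sy - w a)" "\<forall>c\<in>#Ty. r a \<le> r c"
    using is_topK_add_mset[where w=w and z=sy, OF T a mono] by blast
  obtain a' where a': "a' \<in># Ty" "\<forall>c\<in>#Ty. r a' \<le> r c"
    using obtain_min_in_mset[OF nonempty[OF Ty(1)]] by blast
  obtain Txy where Txy: "is_topK r K Txy (add_mset sx (add_mset sy S))"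
    "(\<Sum>s\<in>#Txy. w s) = (\<Sum>s\<in>#Ty. w s) + max 0 (w sx - w a')"
    using is_topK_add_mset[where w=w and z=sx, OF Ty(1) a' mono] by blast
  have "w a \<le> w a'"
    using mono Ty(3) a'(1) by blast
  then have "ln ((\<Sum>s\<in>#Ty. w s) + max 0 (w sx - w a')) - ln (\<Sum>s\<in>#Ty. w s)
      \<le> ln ((\<Sum>s\<in>#T. w s) + max 0 (w sx - w a)) - ln (\<Sum>s\<in>#T. w s)"
    using pos[OF T] Ty(2) by (intro ln_add_diff_mono) auto
  then show ?thesis
    unfolding W[OF T] W[OF Tx(1)] W[OF Ty(1)] W[OF Txy(1)] Tx(2) Txy(2) right_diff_distrib[symmetric]
    using assms(1) by (simp add: mult_left_mono)
qed

lemma user_welfare_submodular_small: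
  fixes \<sigma> :: "'a \<Rightarrow> 'a \<Rightarrow> real"
  assumes "\<beta> > 0" and "K \<ge> 1" and "\<And>s. 0 \<le> \<sigma> s u" and "size S = K - 1"
  shows "user_welfare \<sigma> \<beta> K (add_mset sx (add_mset sy S)) u - user_welfare \<sigma> \<beta> K (add_mset sy S) u
         \<le> user_welfare \<sigma> \<beta> K (add_mset sx S) u - user_welfare \<sigma> \<beta> K S u"
proof -
  define r where "r = (\<lambda>s. \<sigma> s u)"
  define w where "w = (\<lambda>s. exp (\<sigma> s u / \<beta>))"
  define A where "A = (\<Sum>s\<in>#S. w s)"
  have mono: "\<And>a b. r b \<le> r a \<Longrightarrow> w b \<le> w a"
    unfolding r_def w_def using assms(1) by (simp add: divide_right_mono)
  have w_ge_1: "1 \<le> w s" for s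
    unfolding w_def using assms(1,3) by simp
  have W: "user_welfare \<sigma> \<beta> K M u = \<beta> * ln (\<Sum>s\<in>#T. w s)" if "is_topK r K T M" for T M
    using user_welfare_eq_is_topK[OF assms(1), of \<sigma> u K T M] that unfolding r_def w_def by simp
  have "(\<Sum>s\<in>#S. 0) \<le> A"
    unfolding A_def using w_ge_1 by (intro sum_mset_mono) (meson order_trans zero_le_one)
  then have A: "0 \<le> A"
    by simp
  have sizes: "size (add_mset sx S) = K" "size (add_mset sy S) = K"
    using assms(2,4) by simp_all
  have WS: "user_welfare \<sigma> \<beta> K S u = \<beta> * ln (A + 1)"
    unfolding user_welfare_def A_def w_def using sizes by auto
  have Wx: "user_welfare \<sigma> \<beta> K (add_mset sx S) u = \<beta> * ln (A + w sx)"
    using W[OF is_topK_self[OF sizes(1)]] unfolding A_def by (simp add: add.commute)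
  have Wy: "user_welfare \<sigma> \<beta> K (add_mset sy S) u = \<beta> * ln (A + w sy)"
    using W[OF is_topK_self[OF sizes(2)]] unfolding A_def by (simp add: add.commute)
  have "add_mset sy S \<noteq> {#}"
    by simp
  then obtain a' where a': "a' \<in># add_mset sy S" "\<forall>c\<in>#add_mset sy S. r a' \<le> r c"
    by (rule obtain_min_in_mset)
  obtain Txy where Txy: "is_topK r K Txy (add_mset sx (add_mset sy S))"
    "(\<Sum>s\<in>#Txy. w s) = (\<Sum>s\<in>#add_mset sy S. w s) + max 0 (w sx - w a')"
    using is_topK_add_mset[where w=w and z=sx, OF is_topK_self[OF sizes(2)] a' mono] by blast
  have "(\<Sum>s\<in>#add_mset sy S. w s) = A + w sy"
    unfolding A_def by simp
  have "ln ((A + w sy) + max 0 (w sx - w a')) - ln (A + w sy) \<le> ln ((A + 1) + (w sx - 1)) - ln (A + 1)"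
    using A w_ge_1[of a'] w_ge_1[of sx] w_ge_1[of sy] by (intro ln_add_diff_mono) auto
  then show ?thesis
    unfolding WS Wx Wy W[OF Txy(1)] Txy(2) \<open>(\<Sum>s\<in>#add_mset sy S. w s) = A + w sy\<close>
      right_diff_distrib[symmetric]
    using assms(1) by (simp add: mult_left_mono)
qed

lemma user_welfare_submodular:
  fixes \<sigma> :: "'a \<Rightarrow> 'a \<Rightarrow> real"
  assumes "\<beta> > 0" and "K \<ge> 1" and "\<And>s. 0 \<le> \<sigma> s u" and "size S \<ge> K - 1"
  shows "user_welfare \<sigma> \<beta> K (add_mset sx (add_mset sy S)) u - user_welfare \<sigma> \<beta> K (add_mset sy S) u
         \<le> user_welfare \<sigma> \<beta> K (add_mset sx S) u - user_welfare \<sigma> \<beta> K S u"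
proof (cases "K \<le> size S")
  case True
  show ?thesis
    by (rule user_welfare_submodular_large[OF assms(1,2) _ True]) (rule assms(3))
next
  case False
  show ?thesis
    by (rule user_welfare_submodular_small[OF assms(1,2) _ ]) (use assms(3,4) False in auto)
qed

theorem lemma2:
  fixes \<sigma> :: "real^'d \<Rightarrow> real^'d \<Rightarrow> real"
    and \<beta> :: real and K m :: nat and x :: "nat \<Rightarrow> real^'d"
    and S :: "(real^'d) multiset" and sx sy :: "real^'d"
  assumes "\<beta> > 0" and "K \<ge> 1"
    and "\<And>s y. 0 \<le> \<sigma> s y \<and> \<sigma> s y \<le> 1"
    and "size S \<ge> K - 1"
  shows "welfare \<sigma> \<beta> K m x (add_mset sx S) - welfare \<sigma> \<beta> K m x S
         \<ge> welfare \<sigma> \<beta> K m x (add_mset sx (add_mset sy S)) - welfare \<sigma> \<beta> K m x (add_mset sy S)"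
proof -
  have "user_welfare \<sigma> \<beta> K (add_mset sx (add_mset sy S)) u - user_welfare \<sigma> \<beta> K (add_mset sy S) u
      \<le> user_welfare \<sigma> \<beta> K (add_mset sx S) u - user_welfare \<sigma> \<beta> K S u" for u
    by (rule user_welfare_submodular[OF assms(1,2) _ assms(4)]) (use assms(3) in blast)
  then have "(\<Sum>j=1..m. user_welfare \<sigma> \<beta> K (add_mset sx (add_mset sy S)) (x j)
                       - user_welfare \<sigma> \<beta> K (add_mset sy S) (x j))
      \<le> (\<Sum>j=1..m. user_welfare \<sigma> \<beta> K (add_mset sx S) (x j) - user_welfare \<sigma> \<beta> K S (x j))"
    by (rule sum_mono)
  then show ?thesis
    by (simp add: welfare_def sum_subtractf)
qed

end
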